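(* Let $D$ be a finite set of values, and let $Y$ and $Z$ be finite sets of variables with $Y \cap Z = \emptyset$. Let $w \colon \overline{D^{Y\cup Z}} \to \mathbb{R}$ be a subset-monotone ranking function. Let $R \subseteq \overline{D^Y}$ and $S \subseteq \overline{D^Z}$. If $\tau$ is a maximal element of $R$ with respect to $w$ and $\sigma$ is a maximal element of $S$ with respect to $w$, then $\tau \times \sigma$ is a maximal element of $R \wedge S = \{\tau' \times \sigma' \mid \tau' \in R,\ \sigma' \in S\}$ with respect to $w$.
   Context: For finite sets $D$ (values) and $X$ (variables), a partial assignment is a map $\nu \colon X \to D \cup \{\bot\}$, where $\bot$ means "undefined"; $\overline{D^X}$ denotes the set of partial assignments. Two partial assignments $\tau \in \overline{D^Y}$, $\sigma \in \overline{D^Z}$ with $Y\cap Z=\emptyset$ are disjoint, and $\tau\times\sigma \in \overline{D^{Y\cup Z}}$ is the partial assignment agreeing with $\tau$ on $Y$ and with $\sigma$ on $Z$. A $(D,X)$-ranking function is a function $w \colon \overline{D^X}\to\mathbb{R}$; for $Y \subseteq X$ and $\tau \in \overline{D^Y}$, $w(\tau)$ means $w$ applied to $\tau$ extended by assigning $\bot$ to every variable of $X\setminus Y$. $w$ is subset-monotone if for every $Y \subseteq X$, every $\tau_1,\tau_2 \in \overline{D^Y}$ with $w(\tau_1)\le w(\tau_2)$, and every $\sigma \in \overline{D^{X\setminus Y}}$, we have $w(\sigma\times\tau_1)\le w(\sigma\times\tau_2)$. An element $\tau$ of a set $R$ of partial assignments is maximal with respect to $w$ if $w(\tau') \le w(\tau)$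 for every $\tau' \in R$. *)

theory Defs
  imports Complex_Main
begin

text \<open>A partial assignment over variables X with values D: each variable of X is
  mapped to a value in D (Some d) or to undefined (None, i.e. bottom). Outside X the
  function is None; this is exactly the canonical extension by bottom, so a
  partial assignment over Y \<subseteq> X can be fed directly to a (D,X)-ranking function.\<close>
definition partial_assignments :: "'d set \<Rightarrow> 'x set \<Rightarrow> ('x \<Rightarrow> 'd option) set" where
  "partial_assignments D X =
     {\<nu>. (\<forall>x\<in>X. \<nu> x = None \<or> (\<exists>d\<in>D. \<nu> x = Some d)) \<and> (\<forall>x. x \<notin> X \<longrightarrow> \<nu> x = None)}"

definition pa_prod :: "'x set \<Rightarrow> ('x \<Rightarrow> 'd option) \<Rightarrow> ('x \<Rightarrow> 'd option) \<Rightarrow> ('x \<Rightarrow> 'd option)" where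
  "pa_prod Y \<tau> \<sigma> = (\<lambda>x. if x \<in> Y then \<tau> x else \<sigma> x)"

definition subset_monotone :: "'d set \<Rightarrow> 'x set \<Rightarrow> (('x \<Rightarrow> 'd option) \<Rightarrow> real) \<Rightarrow> bool" where
  "subset_monotone D X w \<longleftrightarrow>
     (\<forall>Y \<subseteq> X. \<forall>\<tau>1 \<in> partial_assignments D Y. \<forall>\<tau>2 \<in> partial_assignments D Y.
        \<forall>\<sigma> \<in> partial_assignments D (X - Y).
          w \<tau>1 \<le> w \<tau>2 \<longrightarrow> w (pa_prod (X - Y) \<sigma> \<tau>1) \<le> w (pa_prod (X - Y) \<sigma> \<tau>2))"

definition is_maximal :: "(('x \<Rightarrow> 'd option) \<Rightarrow> real) \<Rightarrow> ('x \<Rightarrow> 'd option) set \<Rightarrow> ('x \<Rightarrow> 'd option) \<Rightarrow> bool" where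
  "is_maximal w R \<tau> \<longleftrightarrow> \<tau> \<in> R \<and> (\<forall>\<tau>' \<in> R. w \<tau>' \<le> w \<tau>)"

definition pa_join :: "'x set \<Rightarrow> ('x \<Rightarrow> 'd option) set \<Rightarrow> ('x \<Rightarrow> 'd option) set \<Rightarrow> ('x \<Rightarrow> 'd option) set" where
  "pa_join Y R S = {pa_prod Y \<tau>' \<sigma>' | \<tau>' \<sigma>'. \<tau>' \<in> R \<and> \<sigma>' \<in> S}"

end

theory Submission
  imports Defs
begin

text \<open>For \<tau>' \<in> R and \<sigma>' \<in> S, subset-monotonicity applied once in each factor gives
  w(\<tau>' \<times> \<sigma>') \<le> w(\<tau>' \<times> \<sigma>) \<le> w(\<tau> \<times> \<sigma>).\<close>

lemma pa_prod_commute: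
  assumes "Y \<inter> Z = {}" "\<tau> \<in> partial_assignments D Y" "\<sigma> \<in> partial_assignments D Z"
  shows "pa_prod Z \<sigma> \<tau> = pa_prod Y \<tau> \<sigma>"
  using assms unfolding pa_prod_def partial_assignments_def by (auto simp: fun_eq_iff)

lemma subset_monotone_pa_prod_right:
  assumes "subset_monotone D (Y \<union> Z) w" "Y \<inter> Z = {}"
    and "\<tau> \<in> partial_assignments D Y"
    and "\<sigma>1 \<in> partial_assignments D Z" "\<sigma>2 \<in> partial_assignments D Z"
    and "w \<sigma>1 \<le> w \<sigma>2"
  shows "w (pa_prod Y \<tau> \<sigma>1) \<le> w (pa_prod Y \<tau> \<sigma>2)"
proof -
  have "(Y \<union> Z) - Z = Y" using \<open>Y \<inter> Z = {}\<close> by blast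
  with assms show ?thesis unfolding subset_monotone_def by (metis Un_upper2)
qed

lemma subset_monotone_pa_prod_left:
  assumes "subset_monotone D (Y \<union> Z) w" "Y \<inter> Z = {}"
    and "\<tau>1 \<in> partial_assignments D Y" "\<tau>2 \<in> partial_assignments D Y"
    and "\<sigma> \<in> partial_assignments D Z"
    and "w \<tau>1 \<le> w \<tau>2"
  shows "w (pa_prod Y \<tau>1 \<sigma>) \<le> w (pa_prod Y \<tau>2 \<sigma>)"
proof -
  have "subset_monotone D (Z \<union> Y) w" "Z \<inter> Y = {}"
    using assms(1,2) by (simp_all add: Un_commute Int_commute)
  then have "w (pa_prod Z \<sigma> \<tau>1) \<le> w (pa_prod Z \<sigma> \<tau>2)"
    using assms(3-6) by (intro subset_monotone_pa_prod_right)
  then show ?thesis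
    using assms(2,3,4,5) by (simp add: pa_prod_commute)
qed

theorem lemma2p2:
  fixes D :: "'d set" and Y Z :: "'x set"
    and w :: "('x \<Rightarrow> 'd option) \<Rightarrow> real"
    and R S :: "('x \<Rightarrow> 'd option) set"
    and \<tau> \<sigma> :: "'x \<Rightarrow> 'd option"
  assumes "finite D" and "finite Y" and "finite Z" and "Y \<inter> Z = {}"
    and "subset_monotone D (Y \<union> Z) w"
    and "R \<subseteq> partial_assignments D Y" and "S \<subseteq> partial_assignments D Z"
    and "is_maximal w R \<tau>" and "is_maximal w S \<sigma>"
  shows "is_maximal w (pa_join Y R S) (pa_prod Y \<tau> \<sigma>)"
proof -
  note mono = assms(5,4)
  have \<tau>: "\<tau> \<in> R" "\<And>\<tau>'. \<tau>' \<in> R \<Longrightarrow> w \<tau>' \<le> w \<tau>"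
    and \<sigma>: "\<sigma> \<in> S" "\<And>\<sigma>'. \<sigma>' \<in> S \<Longrightarrow> w \<sigma>' \<le> w \<sigma>"
    using assms(8,9) unfolding is_maximal_def by auto
  have "w (pa_prod Y \<tau>' \<sigma>') \<le> w (pa_prod Y \<tau> \<sigma>)" if "\<tau>' \<in> R" "\<sigma>' \<in> S" for \<tau>' \<sigma>'
  proof -
    have "w (pa_prod Y \<tau>' \<sigma>') \<le> w (pa_prod Y \<tau>' \<sigma>)"
      using subset_monotone_pa_prod_right[OF mono] that \<sigma> assms(6,7) by blast
    also have "\<dots> \<le> w (pa_prod Y \<tau> \<sigma>)"
      using subset_monotone_pa_prod_left[OF mono] that \<tau> \<sigma> assms(6,7) by blast
    finally show ?thesis .
  qed
  moreover have "pa_prod Y \<tau> \<sigma> \<in> pa_join Y R S"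
    using \<tau> \<sigma> unfolding pa_join_def by blast
  ultimately show ?thesis
    unfolding is_maximal_def pa_join_def by blast
qed

end
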